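(* Let $(\rho_0,p_0)$ solve the TOV system on $[0,R)$ with regular centre and mass function $m_0$. Suppose $r_s\in(0,R)$ satisfies $p_0(r_s)=0$, and set $M=m_0(r_s)>0$, with $\rho_0(r_s)>0$. For $\delta p_c$ near $0$, let $p_{\delta p_c}=p_0+\delta p$ be the deformed pressure of Theorem P1, and let $r_s(\delta p_c)$ be the zero of $p_{\delta p_c}$ near $r_s$ (with $r_s(0)=r_s$). Then $$\left.\frac{d r_s}{d\,\delta p_c}\right|_{0}=\frac{r_s^2\,(1-2M/r_s)^{3/2}\,e^{-2I_0(r_s)}}{\rho_0(r_s)\,M}>0,\qquad I_0(r)=\int_0^r g_0(s)\,ds,$$ and the compactness $\chi(\delta p_c)=2m_0(r_s(\delta p_c))/r_s(\delta p_c)$ satisfies $$\left.\frac{d\chi}{d\,\delta p_c}\right|_{0}=\frac{8\pi}{3}\,\bigl\{3\rho_0(r_s)-\bar\rho_0(r_s)\bigr\}\,r_s\,\left.\frac{d r_s}{d\,\delta p_c}\right|_{0},\qquad \bar\rho_0(r_s)=\frac{M}{\tfrac{4\pi}{3}r_s^3}.$$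
   Context: Units $G=c=1$. Mass function $m(r)=4\pi\int_0^r\rho(s)s^2ds$. $(\rho,p)$ "solves the TOV system on $[0,R)$" if $1-2m/r>0$ on $(0,R)$, $p\in C^1$, and $\frac{dp}{dr}=-\frac{[\rho+p][m+4\pi pr^3]}{r^2[1-2m/r]}$; "regular centre" means $\rho,p$ extend continuously to $r=0$. $g_0(r)=\frac{m_0+4\pi p_0r^3}{r^2[1-2m_0/r]}$. Theorem P1 deformation: with $D(r)=1+4\pi\delta p_c\int_0^r \frac{s e^{-2I_0(s)}}{\sqrt{1-2m_0(s)/s}}ds$, $\delta p(r)=\delta p_c\sqrt{1-2m_0(r)/r}\,e^{-2I_0(r)}/D(r)$; the density (and $m_0$) is unchanged. *)

theory Defs
  imports "HOL-Analysis.Analysis"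
begin

definition mass :: "(real \<Rightarrow> real) \<Rightarrow> real \<Rightarrow> real" where
  "mass \<rho> r = 4 * pi * integral {0..r} (\<lambda>s. \<rho> s * s^2)"

definition tov_rhs :: "(real \<Rightarrow> real) \<Rightarrow> (real \<Rightarrow> real) \<Rightarrow> real \<Rightarrow> real" where
  "tov_rhs \<rho> p r = - ((\<rho> r + p r) * (mass \<rho> r + 4 * pi * p r * r^3)) / (r^2 * (1 - 2 * mass \<rho> r / r))"

definition tov_solution :: "(real \<Rightarrow> real) \<Rightarrow> (real \<Rightarrow> real) \<Rightarrow> real \<Rightarrow> bool" where
  "tov_solution \<rho> p R \<longleftrightarrow>
     (\<forall>r\<in>{0<..<R}. 1 - 2 * mass \<rho> r / r > 0) \<and>
     p C1_differentiable_on {0<..<R} \<and>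
     (\<forall>r\<in>{0<..<R}. (p has_real_derivative tov_rhs \<rho> p r) (at r))"

definition regular_centre :: "(real \<Rightarrow> real) \<Rightarrow> (real \<Rightarrow> real) \<Rightarrow> bool" where
  "regular_centre \<rho> p \<longleftrightarrow> (\<exists>a b. (\<rho> \<longlongrightarrow> a) (at_right 0) \<and> (p \<longlongrightarrow> b) (at_right 0))"

definition g0 :: "(real \<Rightarrow> real) \<Rightarrow> (real \<Rightarrow> real) \<Rightarrow> real \<Rightarrow> real" where
  "g0 \<rho> p r = (mass \<rho> r + 4 * pi * p r * r^3) / (r^2 * (1 - 2 * mass \<rho> r / r))"

definition I0 :: "(real \<Rightarrow> real) \<Rightarrow> (real \<Rightarrow> real) \<Rightarrow> real \<Rightarrow> real" where
  "I0 \<rho> p r = integral {0..r} (g0 \<rho> p)"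

definition Dfun :: "(real \<Rightarrow> real) \<Rightarrow> (real \<Rightarrow> real) \<Rightarrow> real \<Rightarrow> real \<Rightarrow> real" where
  "Dfun \<rho> p dpc r = 1 + 4 * pi * dpc *
     integral {0..r} (\<lambda>s. s * exp (-2 * I0 \<rho> p s) / sqrt (1 - 2 * mass \<rho> s / s))"

definition delta_p :: "(real \<Rightarrow> real) \<Rightarrow> (real \<Rightarrow> real) \<Rightarrow> real \<Rightarrow> real \<Rightarrow> real" where
  "delta_p \<rho> p dpc r = dpc * sqrt (1 - 2 * mass \<rho> r / r) * exp (-2 * I0 \<rho> p r) / Dfun \<rho> p dpc r"

definition deformed_pressure :: "(real \<Rightarrow> real) \<Rightarrow> (real \<Rightarrow> real) \<Rightarrow> real \<Rightarrow> real \<Rightarrow> real" where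
  "deformed_pressure \<rho> p dpc r = p r + delta_p \<rho> p dpc r"

end

theory Submission
  imports Defs
begin

text \<open>
  At the surface the TOV equation gives p0'(rs) = -rho0(rs) M / (rs^2 (1 - 2M/rs)) < 0, so p0
  changes sign transversally at rs. The deformed pressure is p0 + dpc A / (1 + 4 pi dpc J) with
  A = sqrt(1 - 2 m0/r) exp(-2 I0) and J continuous, hence uniformly close to p0 near rs for small
  dpc; the intermediate value theorem gives a zero within any prescribed distance of rs, so the
  zero nearest to rs is a continuous branch. Along any continuous branch r(dpc), write
  p0(r) = g(r) (r - rs) with g continuous and g(rs) = p0'(rs) (Caratheodory); then the difference
  quotient of the branch is -A(r) / ((1 + 4 pi dpc J(r)) g(r)), which tends to -A(rs) / p0'(rs),
  the claimed value. The compactness follows by the chain rule, using m0' = 4 pi rho0 r^2.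
\<close>

lemma integral_from_split:
  fixes f :: "real \<Rightarrow> 'a::banach"
  assumes "continuous_on {a..b} f" "c \<le> a" "f integrable_on {c..a}" "r \<in> {a..b}"
  shows "integral {c..r} f = integral {c..a} f + integral {a..r} f"
proof -
  have int_ar: "f integrable_on {a..r}"
    by (rule integrable_on_subinterval[OF integrable_continuous_interval[OF assms(1)]])
       (use assms(4) in auto)
  have "f integrable_on {c..r}"
    by (rule Henstock_Kurzweil_Integration.integrable_combine[OF _ _ assms(3) int_ar])
       (use assms in auto)
  then show ?thesis
    by (rule Henstock_Kurzweil_Integration.integral_combine[symmetric, rotated 2]) (use assms in auto)
qed

lemma continuous_on_integral_from:
  fixes f :: "real \<Rightarrow> 'a::banach"
  assumes f: "continuous_on {c<..<d} f"
  shows "continuous_on {c<..<d} (\<lambda>r. integral {c..r} f)"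
proof (rule continuous_at_imp_continuous_on, rule ballI)
  fix x assume x: "x \<in> {c<..<d}"
  define a b where "a = (c + x) / 2" and "b = (x + d) / 2"
  have ab: "c < a" "a < x" "x < b" "b < d" using x by (auto simp: a_def b_def)
  have fab: "continuous_on {a..b} f" by (rule continuous_on_subset[OF f]) (use ab in auto)
  have "continuous_on {a..b} (\<lambda>r. integral {c..r} f)"
  proof (cases "f integrable_on {c..a}")
    case True
    have "continuous_on {a..b} (\<lambda>r. integral {a..r} f)"
      by (rule indefinite_integral_continuous_1[OF integrable_continuous_interval[OF fab]])
    then have "continuous_on {a..b} (\<lambda>r. integral {c..a} f + integral {a..r} f)"
      by (rule continuous_on_add[OF continuous_on_const])
    then show ?thesis
      by (rule continuous_on_eq) (rule integral_from_split[OF fab _ True, symmetric]; use ab in auto)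
  next
    case False
    have "\<not> f integrable_on {c..r}" if "r \<in> {a..b}" for r
      using False that integrable_on_subinterval[of f "{c..r}" c a] by auto
    then have zero: "integral {c..r} f = 0" if "r \<in> {a..b}" for r
      using that by (simp add: not_integrable_integral)
    show ?thesis
      by (rule continuous_on_eq[OF continuous_on_const[of _ 0]]) (simp add: zero)
  qed
  then show "isCont (\<lambda>r. integral {c..r} f) x"
    by (rule continuous_on_interior) (use ab in simp)
qed

lemma has_real_derivative_integral_from:
  fixes f :: "real \<Rightarrow> real"
  assumes f: "continuous_on {c<..<d} f" and x: "x \<in> {c<..<d}" and int: "f integrable_on {c..x}"
  shows "((\<lambda>r. integral {c..r} f) has_real_derivative f x) (at x)"
proof -
  define a b where "a = (c + x) / 2" and "b = (x + d) / 2"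
  have ab: "c < a" "a < x" "x < b" "b < d" using x by (auto simp: a_def b_def)
  have fab: "continuous_on {a..b} f" by (rule continuous_on_subset[OF f]) (use ab in auto)
  have int_a: "f integrable_on {c..a}" using integrable_on_subinterval[OF int] ab by auto
  have "((\<lambda>r. integral {a..r} f) has_real_derivative f x) (at x within {a..b})"
    using integral_has_real_derivative[OF fab] ab by simp
  moreover have "at x within {a..b} = at x"
    using ab by (intro at_within_interior) auto
  ultimately have "((\<lambda>r. integral {c..a} f + integral {a..r} f) has_real_derivative f x) (at x)"
    using DERIV_add[OF DERIV_const[of "integral {c..a} f"]] by simp
  then show ?thesis
  proof (rule has_field_derivative_transform_within_open[where S="{a<..<b}"])
    show "integral {c..a} f + integral {a..r} f = integral {c..r} f" if "r \<in> {a<..<b}" for r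
      by (rule integral_from_split[OF fab _ int_a, symmetric]) (use ab that in auto)
  qed (use ab in auto)
qed

lemma eventually_nhds_one_plus_mult_pos:
  fixes J :: "'a::topological_space \<Rightarrow> real"
  assumes "compact S" "continuous_on S J"
  shows "\<forall>\<^sub>F h in nhds 0. \<forall>r\<in>S. 0 < 1 + h * J r"
proof -
  obtain B where B: "B > 0" "\<And>r. r \<in> S \<Longrightarrow> \<bar>J r\<bar> \<le> B"
    using compact_imp_bounded[OF compact_continuous_image[OF assms(2,1)]]
    unfolding bounded_pos by auto
  have "\<forall>\<^sub>F h in nhds 0. h \<in> {-1/B<..<1/B}"
    by (rule eventually_nhds_in_open) (use B(1) in auto)
  then show ?thesis
  proof eventually_elim
    case (elim h)
    have "\<bar>h\<bar> < 1 / B" using elim by auto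
    have "\<bar>h * J r\<bar> < 1" if "r \<in> S" for r
    proof -
      have "\<bar>h * J r\<bar> \<le> \<bar>h\<bar> * B" using B(2)[OF that] by (simp add: abs_mult mult_left_mono)
      also have "\<dots> < 1" using \<open>\<bar>h\<bar> < 1 / B\<close> B(1) by (simp add: field_simps)
      finally show ?thesis .
    qed
    then show ?case by fastforce
  qed
qed

lemma has_real_derivative_neg_sign_change:
  fixes f :: "real \<Rightarrow> real"
  assumes "(f has_real_derivative P) (at x)" "P < 0"
  shows "\<forall>\<^sub>F e in at_right 0. f x < f (x - e) \<and> f (x + e) < f x"
proof -
  obtain d1 where "d1 > 0" "\<forall>e>0. e < d1 \<longrightarrow> f x < f (x - e)"
    using DERIV_neg_dec_left[OF assms] by blast
  moreover obtain d2 where "d2 > 0" "\<forall>e>0. e < d2 \<longrightarrow> f (x + e) < f x"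
    using DERIV_neg_dec_right[OF assms] by blast
  ultimately show ?thesis
    unfolding eventually_at_right_field by (intro exI[of _ "min d1 d2"]) simp
qed

lemma closest_zero_within:
  fixes f :: "real \<Rightarrow> real"
  assumes f: "continuous_on {a..b} f"
    and e: "0 \<le> e" "a \<le> r0 - e" "r0 + e \<le> b"
    and sign: "0 < f (r0 - e)" "f (r0 + e) < 0"
  shows "closest_point {r \<in> {a..b}. f r = 0} r0 \<in> {r \<in> {a..b}. f r = 0}"
    and "\<bar>closest_point {r \<in> {a..b}. f r = 0} r0 - r0\<bar> \<le> e"
proof -
  let ?Z = "{r \<in> {a..b}. f r = 0}"
  have "continuous_on {r0 - e..r0 + e} f"
    by (rule continuous_on_subset[OF f]) (use e in auto)
  then have "\<exists>w. r0 - e \<le> w \<and> w \<le> r0 + e \<and> f w = 0"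
    by (intro IVT2') (use sign e in auto)
  then obtain w where w: "r0 - e \<le> w" "w \<le> r0 + e" "f w = 0"
    by blast
  then have "w \<in> ?Z" using e by auto
  moreover have closed: "closed ?Z"
    by (rule continuous_closed_preimage_constant[OF f]) simp
  ultimately show "closest_point ?Z r0 \<in> ?Z"
    by (intro closest_point_in_set) auto
  have "dist r0 (closest_point ?Z r0) \<le> dist r0 w"
    by (rule closest_point_le[OF closed \<open>w \<in> ?Z\<close>])
  then show "\<bar>closest_point ?Z r0 - r0\<bar> \<le> e"
    using w by (simp add: dist_real_def)
qed

lemma continuous_zero_branch_exists:
  fixes F :: "real \<Rightarrow> real \<Rightarrow> real"
  assumes ab: "a < r0" "r0 < b"
    and cont: "\<forall>\<^sub>F h in nhds 0. continuous_on {a..b} (F h)"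
    and param: "\<And>r. continuous (at 0) (\<lambda>h. F h r)"
    and zero: "F 0 r0 = 0"
    and sign: "\<forall>\<^sub>F e in at_right 0. 0 < F 0 (r0 - e) \<and> F 0 (r0 + e) < 0"
  shows "\<exists>z. z 0 = r0 \<and> continuous (at 0) z \<and>
           (\<forall>\<^sub>F h in nhds 0. z h \<in> {a..b} \<and> F h (z h) = 0)"
proof -
  define z where "z h = closest_point {r \<in> {a..b}. F h r = 0} r0" for h
  obtain d where d: "d > 0"
    "\<And>e. 0 < e \<Longrightarrow> e < d \<Longrightarrow> 0 < F 0 (r0 - e) \<and> F 0 (r0 + e) < 0"
    using sign unfolding eventually_at_right_field by auto
  define e0 where "e0 = min d (min (r0 - a) (b - r0)) / 2"
  have e0: "0 < e0" "e0 < d" "a \<le> r0 - e0" "r0 + e0 \<le> b"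
    using d(1) ab by (auto simp: e0_def min_def field_simps)
  have near: "\<forall>\<^sub>F h in nhds 0. z h \<in> {a..b} \<and> F h (z h) = 0 \<and> \<bar>z h - r0\<bar> \<le> e"
    if "0 < e" "e \<le> e0" for e
  proof -
    have at_param: "((\<lambda>h. F h r) \<longlongrightarrow> F 0 r) (nhds 0)" for r
      using param[of r] tendsto_at_iff_tendsto_nhds[of "\<lambda>h. F h r" 0] by (simp add: isCont_def)
    have "0 < F 0 (r0 - e)" "F 0 (r0 + e) < 0" using d(2)[of e] that e0 by auto
    then have "\<forall>\<^sub>F h in nhds 0. 0 < F h (r0 - e)" "\<forall>\<^sub>F h in nhds 0. F h (r0 + e) < 0"
      by (auto intro: order_tendstoD[OF at_param])
    with cont show ?thesis
    proof eventually_elim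
      case (elim h)
      with that e0 closest_zero_within[of a b "F h" e r0] show ?case
        by (simp add: z_def)
    qed
  qed
  show ?thesis
  proof (intro exI conjI)
    show z0: "z 0 = r0"
      unfolding z_def by (rule closest_point_self) (use ab zero in auto)
    show "continuous (at 0) z"
      unfolding continuous_at z0 tendsto_iff
    proof (intro allI impI)
      fix \<epsilon> :: real assume "0 < \<epsilon>"
      then have "\<forall>\<^sub>F h in nhds 0. \<bar>z h - r0\<bar> \<le> min e0 (\<epsilon> / 2)"
        using near[of "min e0 (\<epsilon> / 2)"] e0 by (auto elim: eventually_mono)
      then have "\<forall>\<^sub>F h in at 0. \<bar>z h - r0\<bar> \<le> min e0 (\<epsilon> / 2)"
        by (rule filter_leD[OF at_within_le_nhds])
      then show "\<forall>\<^sub>F h in at 0. dist (z h) r0 < \<epsilon>"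
        by eventually_elim (use \<open>0 < \<epsilon>\<close> in \<open>auto simp: dist_real_def\<close>)
    qed
    show "\<forall>\<^sub>F h in nhds 0. z h \<in> {a..b} \<and> F h (z h) = 0"
      using near[OF e0(1) order.refl] by (auto elim: eventually_mono)
  qed
qed

lemma implicit_zero_has_real_derivative:
  fixes p q z :: "real \<Rightarrow> real"
  assumes p: "(p has_real_derivative P) (at r0)" "P \<noteq> 0" "p r0 = 0"
    and z: "z 0 = r0" "continuous (at 0) z"
    and q: "(q \<longlongrightarrow> c) (at 0)"
    and eq: "\<forall>\<^sub>F h in at 0. p (z h) + h * q h = 0"
  shows "(z has_real_derivative - c / P) (at 0)"
proof -
  obtain g where g: "\<And>w. p w - p r0 = g w * (w - r0)" "isCont g r0" "g r0 = P"
    using CARAT_DERIV[THEN iffD1, OF p(1)] by blast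
  have gz: "((\<lambda>h. g (z h)) \<longlongrightarrow> P) (at 0)"
    using isCont_tendsto_compose[OF g(2)] z by (simp add: continuous_at g(3))
  have "\<forall>\<^sub>F h in at 0. - q h / g (z h) = (z h - z 0) / (h - 0)"
    using eq tendsto_imp_eventually_ne[OF gz p(2)] eventually_neq_at_within[of 0 0 UNIV]
  proof eventually_elim
    case (elim h)
    then have "g (z h) * (z h - r0) = - (h * q h)"
      using g(1)[of "z h"] p(3) by simp
    then show ?case using elim z(1) by (simp add: field_simps)
  qed
  moreover have "((\<lambda>h. - q h / g (z h)) \<longlongrightarrow> - c / P) (at 0)"
    by (intro tendsto_intros q gz p(2))
  ultimately show ?thesis
    unfolding has_field_derivative_iff by (auto intro: Lim_transform_eventually)
qed

lemma compactness_has_real_derivative: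
  fixes m z :: "real \<Rightarrow> real"
  assumes z: "(z has_real_derivative D) (at 0)" "z 0 = r" "0 < r"
    and m: "(m has_real_derivative 4 * pi * (\<sigma> * r^2)) (at r)"
  shows "((\<lambda>h. 2 * m (z h) / z h) has_real_derivative
           8 * pi / 3 * (3 * \<sigma> - m r / (4 * pi / 3 * r^3)) * r * D) (at 0)"
proof -
  have "((\<lambda>h. m (z h)) has_real_derivative 4 * pi * (\<sigma> * r^2) * D) (at 0)"
    using DERIV_chain2[OF m[folded z(2)] z(1)] by (simp add: z(2))
  from DERIV_divide[OF DERIV_cmult[OF this, of 2] z(1)] z(2,3)
  have deriv: "((\<lambda>h. 2 * m (z h) / z h) has_real_derivative
          (2 * (4 * pi * (\<sigma> * r^2) * D) * r - 2 * m r * D) / (r * r)) (at 0)"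
    by simp
  have slope_eq:  "(2 * (4 * pi * (\<sigma> * r^2) * D) * r - 2 * m r * D) / (r * r)
      = 8 * pi / 3 * (3 * \<sigma> - m r / (4 * pi / 3 * r^3)) * r * D"
    using z(3) by (simp add: field_simps power2_eq_square power3_eq_cube)
  show ?thesis using deriv unfolding slope_eq .
qed

lemma tov_solutionD:
  assumes "tov_solution \<rho> p R" "r \<in> {0<..<R}"
  shows "0 < 1 - 2 * mass \<rho> r / r" and "(p has_real_derivative tov_rhs \<rho> p r) (at r)"
  using assms unfolding tov_solution_def by blast+

lemma tov_solution_continuous_on:
  assumes "tov_solution \<rho> p R"
  shows "continuous_on {0<..<R} p"
proof (rule continuous_at_imp_continuous_on, rule ballI)
  fix r assume "r \<in> {0<..<R}"
  from DERIV_isCont[OF tov_solutionD(2)[OF assms this]] show "isCont p r" .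
qed

lemma continuous_on_mass:
  assumes "continuous_on {0<..<R} \<rho>"
  shows "continuous_on {0<..<R} (mass \<rho>)"
proof -
  have "continuous_on {0<..<R} (\<lambda>s. \<rho> s * s^2)"
    using assms by (intro continuous_intros)
  from continuous_on_integral_from[OF this] show ?thesis
    unfolding mass_def[abs_def] by (intro continuous_intros)
qed

lemma mass_has_real_derivative:
  assumes "continuous_on {0<..<R} \<rho>" "r \<in> {0<..<R}" "(\<lambda>s. \<rho> s * s^2) integrable_on {0..r}"
  shows "(mass \<rho> has_real_derivative 4 * pi * (\<rho> r * r^2)) (at r)"
proof -
  have "continuous_on {0<..<R} (\<lambda>s. \<rho> s * s^2)"
    using assms(1) by (intro continuous_intros)
  from has_real_derivative_integral_from[OF this assms(2,3)] show ?thesis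
    unfolding mass_def[abs_def] by (rule DERIV_cmult)
qed

lemma continuous_on_I0:
  assumes tov: "tov_solution \<rho> p R" and \<rho>: "continuous_on {0<..<R} \<rho>"
  shows "continuous_on {0<..<R} (I0 \<rho> p)"
proof -
  have "r^2 * (1 - 2 * mass \<rho> r / r) \<noteq> 0" if "r \<in> {0<..<R}" for r
    using tov_solutionD(1)[OF tov that] that by simp
  then have "continuous_on {0<..<R} (g0 \<rho> p)"
    unfolding g0_def[abs_def]
    by (intro continuous_intros continuous_on_mass[OF \<rho>] tov_solution_continuous_on[OF tov])
       (auto simp del: mult_eq_0_iff)
  from continuous_on_integral_from[OF this] show ?thesis
    unfolding I0_def[abs_def] .
qed

definition deformation_amplitude :: "(real \<Rightarrow> real) \<Rightarrow> (real \<Rightarrow> real) \<Rightarrow> real \<Rightarrow> real" where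
  "deformation_amplitude \<rho> p r = sqrt (1 - 2 * mass \<rho> r / r) * exp (-2 * I0 \<rho> p r)"

definition deformation_integral :: "(real \<Rightarrow> real) \<Rightarrow> (real \<Rightarrow> real) \<Rightarrow> real \<Rightarrow> real" where
  "deformation_integral \<rho> p r =
     integral {0..r} (\<lambda>s. s * exp (-2 * I0 \<rho> p s) / sqrt (1 - 2 * mass \<rho> s / s))"

lemma deformed_pressure_eq:
  "deformed_pressure \<rho> p h r =
     p r + h * deformation_amplitude \<rho> p r / (1 + 4 * pi * h * deformation_integral \<rho> p r)"
  by (simp add: deformed_pressure_def delta_p_def Dfun_def deformation_amplitude_def
      deformation_integral_def mult.assoc)

lemma continuous_on_deformation_amplitude:
  assumes "tov_solution \<rho> p R" "continuous_on {0<..<R} \<rho>"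
  shows "continuous_on {0<..<R} (deformation_amplitude \<rho> p)"
  unfolding deformation_amplitude_def[abs_def]
  by (intro continuous_intros continuous_on_mass[OF assms(2)] continuous_on_I0[OF assms]) auto

lemma continuous_on_deformation_integral:
  assumes tov: "tov_solution \<rho> p R" and \<rho>: "continuous_on {0<..<R} \<rho>"
  shows "continuous_on {0<..<R} (deformation_integral \<rho> p)"
proof -
  have "sqrt (1 - 2 * mass \<rho> s / s) \<noteq> 0" if "s \<in> {0<..<R}" for s
    using real_sqrt_gt_zero[OF tov_solutionD(1)[OF tov that]] by linarith
  then have "continuous_on {0<..<R} (\<lambda>s. s * exp (-2 * I0 \<rho> p s) / sqrt (1 - 2 * mass \<rho> s / s))"
    by (intro continuous_intros continuous_on_mass[OF \<rho>] continuous_on_I0[OF tov \<rho>]) auto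
  from continuous_on_integral_from[OF this] show ?thesis
    unfolding deformation_integral_def[abs_def] .
qed

lemma deformed_pressure_at_zero: "deformed_pressure \<rho> p 0 r = p r"
  by (simp add: deformed_pressure_def delta_p_def)

lemma isCont_deformed_pressure_parameter: "continuous (at 0) (\<lambda>h. deformed_pressure \<rho> p h r)"
  unfolding deformed_pressure_eq by (intro continuous_intros) simp

lemma eventually_continuous_on_deformed_pressure:
  assumes tov: "tov_solution \<rho> p R" and \<rho>: "continuous_on {0<..<R} \<rho>"
    and ab: "0 < a" "b < R"
  shows "\<forall>\<^sub>F h in nhds 0. continuous_on {a..b} (deformed_pressure \<rho> p h)"
proof -
  have sub: "{a..b} \<subseteq> {0<..<R}" using ab by auto
  have "continuous_on {a..b} (\<lambda>r. 4 * pi * deformation_integral \<rho> p r)"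
    using continuous_on_subset[OF continuous_on_deformation_integral[OF tov \<rho>] sub]
    by (intro continuous_intros)
  from eventually_nhds_one_plus_mult_pos[OF compact_Icc this] show ?thesis
  proof eventually_elim
    case (elim h)
    then have "\<forall>r\<in>{a..b}. 1 + 4 * pi * h * deformation_integral \<rho> p r \<noteq> 0"
      by (force simp: ac_simps)
    then have "continuous_on {a..b} (\<lambda>r. p r + h * deformation_amplitude \<rho> p r /
        (1 + 4 * pi * h * deformation_integral \<rho> p r))"
      using continuous_on_subset[OF tov_solution_continuous_on[OF tov] sub]
        continuous_on_subset[OF continuous_on_deformation_amplitude[OF tov \<rho>] sub]
        continuous_on_subset[OF continuous_on_deformation_integral[OF tov \<rho>] sub]
      by (intro continuous_intros) auto
    then show ?case
      unfolding deformed_pressure_eq[abs_def] .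
  qed
qed

lemma deformed_surface_radius_exists:
  assumes tov: "tov_solution \<rho> p R" and \<rho>: "continuous_on {0<..<R} \<rho>"
    and rs: "rs \<in> {0<..<R}" "p rs = 0" "tov_rhs \<rho> p rs < 0"
  shows "\<exists>rsf. rsf 0 = rs \<and> continuous (at 0) rsf \<and>
           (\<forall>\<^sub>F h in nhds 0. rsf h \<in> {0<..<R} \<and> deformed_pressure \<rho> p h (rsf h) = 0)"
proof -
  obtain rsf where "rsf 0 = rs \<and> continuous (at 0) rsf \<and>
           (\<forall>\<^sub>F h in nhds 0. rsf h \<in> {rs / 2..(rs + R) / 2} \<and>
              deformed_pressure \<rho> p h (rsf h) = 0)"
  proof (atomize_elim, rule continuous_zero_branch_exists)
    show "\<forall>\<^sub>F h in nhds 0. continuous_on {rs / 2..(rs + R) / 2} (deformed_pressure \<rho> p h)"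
      using rs by (intro eventually_continuous_on_deformed_pressure[OF tov \<rho>]) auto
    show "\<forall>\<^sub>F e in at_right 0.
            0 < deformed_pressure \<rho> p 0 (rs - e) \<and> deformed_pressure \<rho> p 0 (rs + e) < 0"
      using has_real_derivative_neg_sign_change[OF tov_solutionD(2)[OF tov rs(1)] rs(3)]
      by (simp add: deformed_pressure_at_zero rs(2))
  qed (use rs in \<open>auto simp: deformed_pressure_at_zero isCont_deformed_pressure_parameter\<close>)
  moreover have "{rs / 2..(rs + R) / 2} \<subseteq> {0<..<R}" using rs by auto
  ultimately show ?thesis by (intro exI[of _ rsf]) (auto elim!: eventually_mono)
qed

lemma deformed_surface_radius_has_real_derivative:
  assumes tov: "tov_solution \<rho> p R" and \<rho>: "continuous_on {0<..<R} \<rho>"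
    and rs: "rs \<in> {0<..<R}" "p rs = 0" "tov_rhs \<rho> p rs \<noteq> 0"
    and rsf: "rsf 0 = rs" "continuous (at 0) rsf"
      "\<forall>\<^sub>F h in nhds 0. deformed_pressure \<rho> p h (rsf h) = 0"
  shows "(rsf has_real_derivative - deformation_amplitude \<rho> p rs / tov_rhs \<rho> p rs) (at 0)"
proof -
  let ?A = "deformation_amplitude \<rho> p" and ?J = "deformation_integral \<rho> p"
  have rsf_lim: "(rsf \<longlongrightarrow> rs) (at 0)" using rsf(1,2) by (simp add: continuous_at)
  have "isCont ?A rs" "isCont ?J rs"
    using continuous_on_deformation_amplitude[OF tov \<rho>] continuous_on_deformation_integral[OF tov \<rho>]
      rs(1)
    by (simp_all add: continuous_on_eq_continuous_at)
  then have "((\<lambda>h. ?A (rsf h) / (1 + 4 * pi * h * ?J (rsf h)))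
      \<longlongrightarrow> ?A rs / (1 + 4 * pi * 0 * ?J rs)) (at 0)"
    by (intro tendsto_intros isCont_tendsto_compose[OF _ rsf_lim]) auto
  moreover have "\<forall>\<^sub>F h in at 0. p (rsf h) + h * (?A (rsf h) / (1 + 4 * pi * h * ?J (rsf h))) = 0"
    using filter_leD[OF at_within_le_nhds rsf(3)] by (simp add: deformed_pressure_eq)
  ultimately show ?thesis
    using implicit_zero_has_real_derivative[OF tov_solutionD(2)[OF tov rs(1)] rs(3,2) rsf(1,2)] by simp
qed

lemma surface_slope_ratio_eq:
  assumes "0 < r" "0 < 1 - 2 * mass \<rho> r / r" "p r = 0"
  shows "- deformation_amplitude \<rho> p r / tov_rhs \<rho> p r =
           r^2 * (1 - 2 * mass \<rho> r / r) powr (3/2) * exp (-2 * I0 \<rho> p r) / (\<rho> r * mass \<rho> r)"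
proof -
  define x where "x = 1 - 2 * mass \<rho> r / r"
  have "x powr (3/2) = x powr (1 + 1/2)" by simp
  also have "\<dots> = x powr 1 * x powr (1/2)" by (rule powr_add)
  also have "\<dots> = x * sqrt x"
    using assms(2) by (simp add: powr_half_sqrt flip: x_def)
  finally have "x powr (3/2) = x * sqrt x" .
  then show ?thesis
    using assms by (simp add: deformation_amplitude_def tov_rhs_def flip: x_def)
qed

theorem mainTheorem3:
  fixes \<rho>0 p0 :: "real \<Rightarrow> real" and R rs :: real
  assumes tov: "tov_solution \<rho>0 p0 R"
    and reg: "regular_centre \<rho>0 p0"
    and rho_cont: "continuous_on {0<..<R} \<rho>0"
    and rs_pos: "0 < rs" and rs_lt: "rs < R"
    and p_zero: "p0 rs = 0"
    and M_pos: "mass \<rho>0 rs > 0"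
    and rho_pos: "\<rho>0 rs > 0"
  shows "(\<exists>rsf. rsf 0 = rs \<and> continuous (at 0) rsf \<and>
            (\<forall>\<^sub>F dpc in nhds 0. rsf dpc \<in> {0<..<R} \<and> deformed_pressure \<rho>0 p0 dpc (rsf dpc) = 0))
       \<and> (\<forall>rsf. rsf 0 = rs \<and> continuous (at 0) rsf \<and>
            (\<forall>\<^sub>F dpc in nhds 0. rsf dpc \<in> {0<..<R} \<and> deformed_pressure \<rho>0 p0 dpc (rsf dpc) = 0)
          \<longrightarrow> (rsf has_real_derivative
                 (rs^2 * (1 - 2 * mass \<rho>0 rs / rs) powr (3/2) * exp (-2 * I0 \<rho>0 p0 rs)
                   / (\<rho>0 rs * mass \<rho>0 rs))) (at 0)
            \<and> ((\<lambda>dpc. 2 * mass \<rho>0 (rsf dpc) / rsf dpc) has_real_derivative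
                 (8 * pi / 3 * (3 * \<rho>0 rs - mass \<rho>0 rs / (4 * pi / 3 * rs^3)) * rs *
                  (rs^2 * (1 - 2 * mass \<rho>0 rs / rs) powr (3/2) * exp (-2 * I0 \<rho>0 p0 rs)
                   / (\<rho>0 rs * mass \<rho>0 rs)))) (at 0))
       \<and> rs^2 * (1 - 2 * mass \<rho>0 rs / rs) powr (3/2) * exp (-2 * I0 \<rho>0 p0 rs)
           / (\<rho>0 rs * mass \<rho>0 rs) > 0"
proof -
  \<comment> \<open>The argument is local near \<open>rs\<close>.\<close>
  let ?M = "mass \<rho>0 rs"
  let ?D = "rs^2 * (1 - 2 * ?M / rs) powr (3/2) * exp (-2 * I0 \<rho>0 p0 rs) / (\<rho>0 rs * ?M)"
  have rs: "rs \<in> {0<..<R}" using rs_pos rs_lt by simp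
  have x_pos: "0 < 1 - 2 * ?M / rs" using tov_solutionD(1)[OF tov rs] .
  have slope_neg: "tov_rhs \<rho>0 p0 rs < 0"
    using rho_pos M_pos x_pos rs_pos by (simp add: tov_rhs_def p_zero divide_neg_pos)
  have D_eq: "- deformation_amplitude \<rho>0 p0 rs / tov_rhs \<rho>0 p0 rs = ?D"
    by (rule surface_slope_ratio_eq[where p = p0, OF rs_pos x_pos p_zero])
  \<comment> \<open>A non-integrable integrand would give the junk value \<open>mass \<rho>0 rs = 0\<close>.\<close>
  have "(\<lambda>s. \<rho>0 s * s^2) integrable_on {0..rs}"
    using M_pos not_integrable_integral unfolding mass_def by fastforce
  then have mass_deriv: "(mass \<rho>0 has_real_derivative 4 * pi * (\<rho>0 rs * rs^2)) (at rs)"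
    by (rule mass_has_real_derivative[OF rho_cont rs])
  have "(rsf has_real_derivative ?D) (at 0) \<and>
      ((\<lambda>h. 2 * mass \<rho>0 (rsf h) / rsf h) has_real_derivative
         8 * pi / 3 * (3 * \<rho>0 rs - ?M / (4 * pi / 3 * rs^3)) * rs * ?D) (at 0)"
    if "rsf 0 = rs" "continuous (at 0) rsf"
      "\<forall>\<^sub>F h in nhds 0. rsf h \<in> {0<..<R} \<and> deformed_pressure \<rho>0 p0 h (rsf h) = 0" for rsf
  proof -
    have "\<forall>\<^sub>F h in nhds 0. deformed_pressure \<rho>0 p0 h (rsf h) = 0"
      using that(3) by (rule eventually_mono) simp
    from deformed_surface_radius_has_real_derivative[OF tov rho_cont rs p_zero _ that(1,2) this]
    have rsf_deriv: "(rsf has_real_derivative ?D) (at 0)"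
      using slope_neg unfolding D_eq by simp
    show ?thesis
      using rsf_deriv compactness_has_real_derivative[OF rsf_deriv that(1) rs_pos mass_deriv] by blast
  qed
  moreover have "0 < ?D" using x_pos rho_pos M_pos rs_pos by simp
  ultimately show ?thesis
    using deformed_surface_radius_exists[OF tov rho_cont rs p_zero slope_neg] by blast
qed

end
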